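(* Let $\hat W$ be a first degree iMPO in regular form of bond dimension $\chi$, let $(\hat W_n)_{n\ge1}$ be generated from $\hat W_0:=\hat W$ by QR iteration with a positive rank-revealing QR ($(\hat Q_n,R_n)$ the block-respecting QR decomposition of $\hat W_{n-1}$, $\hat W_n:=R_n\hat Q_n$), and suppose the leading eigenvector $X$ of $T_V$ (left eigenvector $XT_V=X$ with $X_{00}=1$, $\hat V$ the upper-left $(1+\chi)\times(1+\chi)$ block of $\hat W$) is invertible. Then every $\hat W_n$ has the same bond dimension $\chi$ as $\hat W$.
   Context: $\mathcal A$ is the algebra of operators on $\mathbb C^q$ with inner product $\langle\hat A,\hat B\rangle=\mathrm{Tr}[\hat A^\dagger\hat B]/\mathrm{Tr}[\hat 1]$ and orthonormal basis $\{\hat O_\alpha\}$ with $\hat O_0=\hat 1$; $(W_\alpha)_{ab}=\langle\hat O_\alpha,\hat W_{ab}\rangle$ and the transfer matrix acts by $XT_W=\sum_\alpha W_\alpha^\dagger XW_\alpha$. An iMPO in regular form of bond dimension $\chi$ is a $(\chi+2)\times(\chi+2)$ matrix with entries in $\mathcal A$ of block form $\begin{pmatrix}\hat 1&\hat{\mathbf c}&\hat d\\0&\hat{\mathsf A}&\hat{\mathbf b}\\0&0&\hat 1\end{pmatrix}$ with upper-left block $\hat V=\begin{pmatrix}\hat 1&\hat{\mathbf c}\\0&\hat{\mathsf A}\end{pmatrix}$; first degree means all eigenvalues of $T_A$ have modulus $<1$. Block-respecting QR: $\hat V=\hat V'R'$ with $\hat V'=\begin{pmatrix}\hat 1&\hat{\mathbf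 c}'\\0&\hat{\mathsf A}'\end{pmatrix}$ having orthonormal columns and $R'=\begin{pmatrix}1&\mathbf t\\0&\mathsf R\end{pmatrix}$ upper triangular, and $\hat Q=\begin{pmatrix}\hat 1&\hat{\mathbf c}'&\hat d\\0&\hat{\mathsf A}'&\hat{\mathbf b}\\0&0&\hat 1\end{pmatrix}$, $R=\begin{pmatrix}1&\mathbf t&0\\0&\mathsf R&0\\0&0&1\end{pmatrix}$. Positive rank-revealing: viewing $\hat V$ as a complex $q^2(1+\chi)\times(1+\chi)$ matrix of column rank $1+\chi'$, $\hat V'$ has $1+\chi'$ columns and $R'$ has $1+\chi'$ rows, and if $\chi'=\chi$ then $R'$ has positive diagonal. *)

theory Defs
  imports Complex_Main "Jordan_Normal_Form.DL_Rank"
begin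

text \<open>Operators on C^q are complex q x q matrices (type complex mat, carrier q q).
An operator-valued matrix (e.g. an iMPO) is a complex mat mat whose entries are operators.\<close>

definition op_inner :: "nat \<Rightarrow> complex mat \<Rightarrow> complex mat \<Rightarrow> complex" where
  "op_inner q A B = (\<Sum>i<q. \<Sum>j<q. cnj (A $$ (i,j)) * B $$ (i,j)) / of_nat q"

definition opmat_ok :: "nat \<Rightarrow> nat \<Rightarrow> nat \<Rightarrow> complex mat mat \<Rightarrow> bool" where
  "opmat_ok q m n W \<longleftrightarrow> W \<in> carrier_mat m n \<and> (\<forall>i<m. \<forall>j<n. W $$ (i,j) \<in> carrier_mat q q)"

definition op_onb :: "nat \<Rightarrow> (nat \<Rightarrow> complex mat) \<Rightarrow> bool" where
  "op_onb q Ob \<longleftrightarrow> (\<forall>\<alpha><q*q. Ob \<alpha> \<in> carrier_mat q q) \<and>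
     (\<forall>\<alpha><q*q. \<forall>\<beta><q*q. op_inner q (Ob \<alpha>) (Ob \<beta>) = (if \<alpha> = \<beta> then 1 else 0)) \<and>
     Ob 0 = 1\<^sub>m q"

definition coef_mat :: "nat \<Rightarrow> (nat \<Rightarrow> complex mat) \<Rightarrow> nat \<Rightarrow> complex mat mat \<Rightarrow> complex mat" where
  "coef_mat q Ob \<alpha> W = mat (dim_row W) (dim_col W) (\<lambda>(a,b). op_inner q (Ob \<alpha>) (W $$ (a,b)))"

text \<open>Transfer matrix: X T_W = sum_alpha W_alpha^dagger X W_alpha (written entrywise).\<close>
definition transfer :: "nat \<Rightarrow> (nat \<Rightarrow> complex mat) \<Rightarrow> complex mat mat \<Rightarrow> complex mat \<Rightarrow> complex mat" where
  "transfer q Ob W X = mat (dim_col W) (dim_col W) (\<lambda>(c,d).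
      \<Sum>\<alpha><q*q. \<Sum>a<dim_row W. \<Sum>b<dim_row W.
        cnj (coef_mat q Ob \<alpha> W $$ (a,c)) * X $$ (a,b) * coef_mat q Ob \<alpha> W $$ (b,d))"

definition regular_form :: "nat \<Rightarrow> nat \<Rightarrow> complex mat mat \<Rightarrow> bool" where
  "regular_form q \<chi> W \<longleftrightarrow> opmat_ok q (\<chi>+2) (\<chi>+2) W \<and>
     W $$ (0,0) = 1\<^sub>m q \<and> W $$ (\<chi>+1,\<chi>+1) = 1\<^sub>m q \<and>
     (\<forall>i. 1 \<le> i \<and> i \<le> \<chi>+1 \<longrightarrow> W $$ (i,0) = 0\<^sub>m q q) \<and>
     (\<forall>j\<le>\<chi>. W $$ (\<chi>+1,j) = 0\<^sub>m q q)"

definition bond_dim :: "complex mat mat \<Rightarrow> nat" where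
  "bond_dim W = dim_row W - 2"

definition V_block :: "nat \<Rightarrow> complex mat mat \<Rightarrow> complex mat mat" where
  "V_block \<chi> W = mat (\<chi>+1) (\<chi>+1) (\<lambda>(i,j). W $$ (i,j))"

definition A_block :: "nat \<Rightarrow> complex mat mat \<Rightarrow> complex mat mat" where
  "A_block \<chi> W = mat \<chi> \<chi> (\<lambda>(i,j). W $$ (i+1,j+1))"

definition first_degree :: "nat \<Rightarrow> (nat \<Rightarrow> complex mat) \<Rightarrow> nat \<Rightarrow> complex mat mat \<Rightarrow> bool" where
  "first_degree q Ob \<chi> W \<longleftrightarrow> (\<forall>ev Y. Y \<in> carrier_mat \<chi> \<chi> \<and> Y \<noteq> 0\<^sub>m \<chi> \<chi> \<and>
      transfer q Ob (A_block \<chi> W) Y = ev \<cdot>\<^sub>m Y \<longrightarrow> cmod ev < 1)"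

definition opmat_times_mat :: "nat \<Rightarrow> complex mat mat \<Rightarrow> complex mat \<Rightarrow> complex mat mat" where
  "opmat_times_mat q V R = mat (dim_row V) (dim_col R) (\<lambda>(i,j).
     mat q q (\<lambda>(k,l). \<Sum>m<dim_col V. V $$ (i,m) $$ (k,l) * R $$ (m,j)))"

definition mat_times_opmat :: "nat \<Rightarrow> complex mat \<Rightarrow> complex mat mat \<Rightarrow> complex mat mat" where
  "mat_times_opmat q R Q = mat (dim_row R) (dim_col Q) (\<lambda>(i,j).
     mat q q (\<lambda>(k,l). \<Sum>m<dim_col R. R $$ (i,m) * Q $$ (m,j) $$ (k,l)))"

definition flatten :: "nat \<Rightarrow> complex mat mat \<Rightarrow> complex mat" where
  "flatten q V = mat (q*q*dim_row V) (dim_col V)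
     (\<lambda>(r,j). V $$ (r div (q*q), j) $$ ((r mod (q*q)) div q, r mod q))"

definition column_rank :: "complex mat \<Rightarrow> nat" where
  "column_rank M = vec_space.rank (dim_row M) M"

definition orthonormal_cols :: "nat \<Rightarrow> complex mat mat \<Rightarrow> bool" where
  "orthonormal_cols q V \<longleftrightarrow> (\<forall>i<dim_col V. \<forall>j<dim_col V.
     (\<Sum>a<dim_row V. op_inner q (V $$ (a,i)) (V $$ (a,j))) = (if i = j then 1 else 0))"

definition pos_rr_block_QR :: "nat \<Rightarrow> complex mat mat \<Rightarrow> complex mat mat \<Rightarrow> complex mat \<Rightarrow> bool" where
  "pos_rr_block_QR q W Q R \<longleftrightarrow>
    (\<exists>\<chi> \<chi>' V' R'.
      regular_form q \<chi> W \<and>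
      \<comment> \<open>V' = [[1, c'],[0, A']] with orthonormal columns\<close>
      opmat_ok q (\<chi>+1) (\<chi>'+1) V' \<and>
      V' $$ (0,0) = 1\<^sub>m q \<and> (\<forall>i. 1 \<le> i \<and> i \<le> \<chi> \<longrightarrow> V' $$ (i,0) = 0\<^sub>m q q) \<and>
      orthonormal_cols q V' \<and>
      \<comment> \<open>R' = [[1, t],[0, R]] upper triangular\<close>
      R' \<in> carrier_mat (\<chi>'+1) (\<chi>+1) \<and>
      R' $$ (0,0) = 1 \<and> (\<forall>i<\<chi>'+1. \<forall>j<\<chi>+1. j < i \<longrightarrow> R' $$ (i,j) = 0) \<and>
      \<comment> \<open>V = V' R'\<close>
      V_block \<chi> W = opmat_times_mat q V' R' \<and>
      \<comment> \<open>Q = [[1, c', d],[0, A', b],[0,0,1]]\<close>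
      Q = mat (\<chi>+2) (\<chi>'+2) (\<lambda>(i,j).
            if j \<le> \<chi>' then (if i \<le> \<chi> then V' $$ (i,j) else 0\<^sub>m q q)
            else W $$ (i, \<chi>+1)) \<and>
      \<comment> \<open>R = [[1, t, 0],[0, R, 0],[0, 0, 1]]\<close>
      R = mat (\<chi>'+2) (\<chi>+2) (\<lambda>(i,j).
            if i \<le> \<chi>' \<and> j \<le> \<chi> then R' $$ (i,j)
            else if i = \<chi>'+1 \<and> j = \<chi>+1 then 1 else 0) \<and>
      \<comment> \<open>positive rank-revealing\<close>
      column_rank (flatten q (V_block \<chi> W)) = 1 + \<chi>' \<and>
      (\<chi>' = \<chi> \<longrightarrow> (\<forall>i\<le>\<chi>. R' $$ (i,i) \<in> \<real> \<and> 0 < Re (R' $$ (i,i)))))"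

end

theory Submission
  imports Defs
begin

text \<open>The invariant of the iteration is that the columns of the upper-left block V of W_n are
linearly independent over the scalars, i.e. the flattened q^2(1+chi) x (1+chi) matrix has full
column rank, so that the rank-revealing QR step keeps all 1+chi columns. Initially, if V c = 0 then
V_alpha c = 0 for every alpha, hence X c = (X T_V) c = sum_alpha V_alpha^* X V_alpha c = 0 and c = 0 as
X is invertible. In a step V = V' R' and the next upper-left block is R' V': R' is injective because
V is, and V' is injective because its columns are orthonormal.

Only the invertibility of X enters.\<close>

lemma rank_eq_dim_col_if_trivial_kernel:
  fixes A :: "'a::field mat"
  assumes A: "A \<in> carrier_mat n nc"
    and ker: "\<And>v. v \<in> carrier_vec nc \<Longrightarrow> A *\<^sub>v v = 0\<^sub>v n \<Longrightarrow> v = 0\<^sub>v nc"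
  shows "vec_space.rank n A = nc"
proof -
  interpret vec_space "TYPE('a)" n .
  have distinct: "distinct (cols A)"
  proof (rule ccontr)
    assume "\<not> distinct (cols A)"
    then obtain i j where ij: "i < nc" "j < nc" "i \<noteq> j" "col A i = col A j"
      using A by (auto simp: distinct_conv_nth)
    define v :: "'a vec" where "v = unit_vec nc i - unit_vec nc j"
    have v: "v \<in> carrier_vec nc" unfolding v_def by simp
    have "A *\<^sub>v v = 0\<^sub>v n"
    proof (rule eq_vecI)
      fix r assume "r < dim_vec (0\<^sub>v n :: 'a vec)"
      hence r: "r < n" by simp
      have "(A *\<^sub>v v) $ r = row A r \<bullet> unit_vec nc i - row A r \<bullet> unit_vec nc j"
        unfolding v_def using A r by (simp add: scalar_prod_minus_distrib[of _ nc])
      also have "\<dots> = col A i $ r - col A j $ r" using A r ij(1,2) by simp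
      also have "\<dots> = 0" using ij(4) by simp
      finally show "(A *\<^sub>v v) $ r = 0\<^sub>v n $ r" using r by simp
    qed (use A in simp)
    hence "v $ i = 0" using ker[OF v] ij by simp
    thus False unfolding v_def using ij by simp
  qed
  have "lin_indpt (set (cols A))"
  proof
    assume "lin_dep (set (cols A))"
    then obtain v where "v \<in> carrier_vec nc" "v \<noteq> 0\<^sub>v nc" "A *\<^sub>v v = 0\<^sub>v n"
      using lin_depE[OF A _ distinct] by blast
    thus False using ker by blast
  qed
  thus ?thesis using lin_indpt_full_rank[OF A distinct] by blast
qed

lemma invertible_mat_mult_vec_zero_imp_zero:
  fixes X :: "'a::comm_ring_1 mat"
  assumes X: "X \<in> carrier_mat n n" and inv: "invertible_mat X"
    and v: "v \<in> carrier_vec n" and Xv: "X *\<^sub>v v = 0\<^sub>v n"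
  shows "v = 0\<^sub>v n"
proof -
  obtain B where BX: "B * X = 1\<^sub>m (dim_row B)" and XB: "X * B = 1\<^sub>m (dim_row X)"
    using inv unfolding invertible_mat_def inverts_mat_def by blast
  have B: "B \<in> carrier_mat n n"
    using BX XB X by (metis carrier_matD carrier_matI index_mult_mat(2,3) index_one_mat(2,3))
  have "v = (B * X) *\<^sub>v v" using BX B v by simp
  also have "\<dots> = B *\<^sub>v (X *\<^sub>v v)" using B X v by simp
  also have "\<dots> = 0\<^sub>v n" unfolding Xv using B by (intro eq_vecI) auto
  finally show ?thesis .
qed

lemma sum_distrib_right_swap:
  "(\<Sum>d\<in>D. (\<Sum>a\<in>A. f a d) * (c d :: 'a::comm_semiring_0)) = (\<Sum>a\<in>A. \<Sum>d\<in>D. f a d * c d)"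
  by (simp add: sum_distrib_right) (rule sum.swap)

lemma sum_op_inner_right:
  "(\<Sum>d\<in>D. op_inner q A (B d) * c d) =
   (\<Sum>i<q. \<Sum>j<q. cnj (A $$ (i,j)) * (\<Sum>d\<in>D. B d $$ (i,j) * c d)) / of_nat q"
  unfolding op_inner_def
  by (simp add: sum_divide_distrib[symmetric] sum_distrib_left sum_distrib_right mult.assoc
      sum.swap[of _ D])

lemma flatten_index:
  assumes V: "V \<in> carrier_mat m n" and a: "a < m" and k: "k < q" and l: "l < q"
  shows "a * (q*q) + (k*q + l) < q*q*m" (is "?r < _")
    and "j < n \<Longrightarrow> flatten q V $$ (a * (q*q) + (k*q + l), j) = V $$ (a,j) $$ (k,l)"
proof -
  have "k*q + l < (k+1)*q" using l by simp
  also have "\<dots> \<le> q*q" using k by (intro mult_le_mono1) simp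
  finally have kl: "k*q + l < q*q" .
  have "?r < (a+1)*(q*q)" using kl by simp
  also have "\<dots> \<le> m*(q*q)" using a by (intro mult_le_mono1) simp
  finally have r: "?r < q*q*m" by (simp add: mult.commute)
  then show "?r < q*q*m" .
  have "?r mod q = (l + (a*q + k)*q) mod q"
    by (rule arg_cong[where f = "\<lambda>x. x mod q"]) (simp add: algebra_simps)
  also have "\<dots> = l" using l by simp
  finally have "?r mod q = l" .
  moreover assume "j < n"
  ultimately show "flatten q V $$ (?r, j) = V $$ (a,j) $$ (k,l)"
    using V r kl k l by (simp add: flatten_def)
qed

definition opmat_cols_lin_indpt :: "nat \<Rightarrow> complex mat mat \<Rightarrow> bool" where
  "opmat_cols_lin_indpt q V \<longleftrightarrow> (\<forall>c.
     (\<forall>a<dim_row V. \<forall>k<q. \<forall>l<q. (\<Sum>j<dim_col V. V $$ (a,j) $$ (k,l) * c j) = 0) \<longrightarrow>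
     (\<forall>j<dim_col V. c j = 0))"

lemma opmat_cols_lin_indptI:
  assumes "\<And>c j. (\<And>a k l. a < dim_row V \<Longrightarrow> k < q \<Longrightarrow> l < q \<Longrightarrow>
      (\<Sum>j<dim_col V. V $$ (a,j) $$ (k,l) * c j) = 0) \<Longrightarrow> j < dim_col V \<Longrightarrow> c j = 0"
  shows "opmat_cols_lin_indpt q V"
  using assms unfolding opmat_cols_lin_indpt_def by blast

lemma opmat_cols_lin_indptD:
  assumes "opmat_cols_lin_indpt q V"
    and "\<And>a k l. a < dim_row V \<Longrightarrow> k < q \<Longrightarrow> l < q \<Longrightarrow>
      (\<Sum>j<dim_col V. V $$ (a,j) $$ (k,l) * c j) = 0"
    and "j < dim_col V"
  shows "c j = 0"
  using assms unfolding opmat_cols_lin_indpt_def by blast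

lemma column_rank_flatten:
  assumes V: "V \<in> carrier_mat m n" and indpt: "opmat_cols_lin_indpt q V"
  shows "column_rank (flatten q V) = n"
proof -
  have F: "flatten q V \<in> carrier_mat (q*q*m) n" using V unfolding flatten_def by simp
  have "vec_space.rank (q*q*m) (flatten q V) = n"
  proof (rule rank_eq_dim_col_if_trivial_kernel[OF F])
    fix v :: "complex vec"
    assume v: "v \<in> carrier_vec n" and Fv: "flatten q V *\<^sub>v v = 0\<^sub>v (q*q*m)"
    have "v $ j = 0" if j: "j < n" for j
    proof (rule opmat_cols_lin_indptD[OF indpt])
      fix a k l assume a: "a < dim_row V" and k: "k < q" and l: "l < q"
      let ?r = "a * (q*q) + (k*q + l)"
      have r: "?r < q*q*m" using flatten_index(1) V a k l by blast
      have "(\<Sum>j<dim_col V. V $$ (a,j) $$ (k,l) * v $ j) = (\<Sum>j<n. flatten q V $$ (?r,j) * v $ j)"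
        using flatten_index(2) V a k l by (intro sum.cong) auto
      also have "\<dots> = (flatten q V *\<^sub>v v) $ ?r"
        using F v r by (simp add: scalar_prod_def atLeast0LessThan)
      finally show "(\<Sum>j<dim_col V. V $$ (a,j) $$ (k,l) * v $ j) = 0" using Fv r by simp
    qed (use V j in simp)
    thus "v = 0\<^sub>v n" using v by (intro eq_vecI) auto
  qed
  thus ?thesis unfolding column_rank_def using F by simp
qed

lemma opmat_cols_lin_indpt_if_transfer_fixed_invertible:
  assumes V: "V \<in> carrier_mat n n" and X: "X \<in> carrier_mat n n"
    and fixed: "transfer q Ob V X = X" and inv: "invertible_mat X"
  shows "opmat_cols_lin_indpt q V"
proof (rule opmat_cols_lin_indptI)
  fix c :: "nat \<Rightarrow> complex" and j
  assume Vc: "\<And>a k l. a < dim_row V \<Longrightarrow> k < q \<Longrightarrow> l < q \<Longrightarrow>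
      (\<Sum>j<dim_col V. V $$ (a,j) $$ (k,l) * c j) = 0"
    and j: "j < dim_col V"
  have coef_c: "(\<Sum>d<n. coef_mat q Ob \<alpha> V $$ (b,d) * c d) = 0" if b: "b < n" for \<alpha> b
  proof -
    have "(\<Sum>d<n. coef_mat q Ob \<alpha> V $$ (b,d) * c d) = (\<Sum>d<n. op_inner q (Ob \<alpha>) (V $$ (b,d)) * c d)"
      using V b by (intro sum.cong) (auto simp: coef_mat_def)
    also have "\<dots> = 0" unfolding sum_op_inner_right using Vc V b by simp
    finally show ?thesis .
  qed
  have X_c: "(\<Sum>d<n. X $$ (i,d) * c d) = 0" if i: "i < n" for i
  proof -
    have "(\<Sum>d<n. X $$ (i,d) * c d) = (\<Sum>d<n. (\<Sum>\<alpha><q*q. \<Sum>a<n. \<Sum>b<n.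
        cnj (coef_mat q Ob \<alpha> V $$ (a,i)) * X $$ (a,b) * coef_mat q Ob \<alpha> V $$ (b,d)) * c d)"
      using V i by (subst (1) fixed[symmetric]) (auto simp: transfer_def intro!: sum.cong)
    also have "\<dots> = (\<Sum>\<alpha><q*q. \<Sum>a<n. \<Sum>b<n. cnj (coef_mat q Ob \<alpha> V $$ (a,i)) * X $$ (a,b) *
        (\<Sum>d<n. coef_mat q Ob \<alpha> V $$ (b,d) * c d))"
      by (simp only: sum_distrib_right_swap sum_distrib_left mult.assoc)
    also have "\<dots> = 0" using coef_c by simp
    finally show ?thesis .
  qed
  have "X *\<^sub>v vec n c = 0\<^sub>v n"
    using X X_c by (intro eq_vecI) (auto simp: scalar_prod_def atLeast0LessThan)
  hence "vec n c = 0\<^sub>v n" using invertible_mat_mult_vec_zero_imp_zero[OF X inv] by simp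
  thus "c j = 0" using V j by (metis carrier_matD(2) index_vec index_zero_vec(1))
qed

lemma opmat_cols_lin_indpt_if_orthonormal_cols:
  assumes orth: "orthonormal_cols q V"
  shows "opmat_cols_lin_indpt q V"
proof (rule opmat_cols_lin_indptI)
  fix c :: "nat \<Rightarrow> complex" and i
  assume Vc: "\<And>a k l. a < dim_row V \<Longrightarrow> k < q \<Longrightarrow> l < q \<Longrightarrow>
      (\<Sum>j<dim_col V. V $$ (a,j) $$ (k,l) * c j) = 0"
    and i: "i < dim_col V"
  have "c i = (\<Sum>j<dim_col V. if i = j then c j else 0)"
    using i by simp
  also have "\<dots> = (\<Sum>j<dim_col V. (\<Sum>a<dim_row V. op_inner q (V $$ (a,i)) (V $$ (a,j))) * c j)"
    using orth i unfolding orthonormal_cols_def by (intro sum.cong) auto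
  also have "\<dots> = (\<Sum>a<dim_row V. (\<Sum>k<q. \<Sum>l<q. cnj (V $$ (a,i) $$ (k,l)) *
      (\<Sum>j<dim_col V. V $$ (a,j) $$ (k,l) * c j)) / of_nat q)"
    by (simp only: sum_distrib_right_swap sum_op_inner_right)
  also have "\<dots> = 0" using Vc by simp
  finally show "c i = 0" .
qed

lemma opmat_cols_lin_indpt_mat_times_opmat:
  assumes VR: "opmat_cols_lin_indpt q (opmat_times_mat q V R)"
    and Q: "opmat_cols_lin_indpt q Q"
    and dims: "dim_row R = dim_col V" "dim_col R = dim_row Q"
  shows "opmat_cols_lin_indpt q (mat_times_opmat q R Q)"
proof (rule opmat_cols_lin_indptI)
  fix c :: "nat \<Rightarrow> complex" and i
  assume RQc: "\<And>a k l. a < dim_row (mat_times_opmat q R Q) \<Longrightarrow> k < q \<Longrightarrow> l < q \<Longrightarrow>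
      (\<Sum>j<dim_col (mat_times_opmat q R Q). mat_times_opmat q R Q $$ (a,j) $$ (k,l) * c j) = 0"
    and i: "i < dim_col (mat_times_opmat q R Q)"
  define d where "d m k l = (\<Sum>j<dim_col Q. Q $$ (m,j) $$ (k,l) * c j)" for m k l
  have R_d: "(\<Sum>m<dim_col R. R $$ (a,m) * d m k l) = 0"
    if "a < dim_row R" "k < q" "l < q" for a k l
  proof -
    have "(\<Sum>m<dim_col R. R $$ (a,m) * d m k l) =
        (\<Sum>j<dim_col Q. mat_times_opmat q R Q $$ (a,j) $$ (k,l) * c j)"
      using that unfolding d_def mat_times_opmat_def
      by (simp add: sum_distrib_right_swap sum_distrib_left mult.assoc)
    also have "\<dots> = 0" using RQc that by (simp add: mat_times_opmat_def)
    finally show ?thesis .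
  qed
  \<comment> \<open>R is injective because V R is.\<close>
  have d_0: "d m k l = 0" if "m < dim_row Q" "k < q" "l < q" for m k l
  proof (rule opmat_cols_lin_indptD[OF VR, where c = "\<lambda>b. d b k l"])
    fix a k' l' assume "a < dim_row (opmat_times_mat q V R)" "k' < q" "l' < q"
    then have "(\<Sum>b<dim_col (opmat_times_mat q V R). opmat_times_mat q V R $$ (a,b) $$ (k',l') * d b k l)
        = (\<Sum>m<dim_col V. V $$ (a,m) $$ (k',l') * (\<Sum>b<dim_col R. R $$ (m,b) * d b k l))"
      unfolding opmat_times_mat_def
      by (simp add: sum_distrib_right_swap sum_distrib_left mult.assoc)
    also have "\<dots> = 0" using R_d dims \<open>k < q\<close> \<open>l < q\<close> by simp
    finally show "(\<Sum>b<dim_col (opmat_times_mat q V R).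
        opmat_times_mat q V R $$ (a,b) $$ (k',l') * d b k l) = 0" .
  qed (use that dims in \<open>simp add: opmat_times_mat_def\<close>)
  show "c i = 0"
    using opmat_cols_lin_indptD[OF Q, of c i] d_0 i unfolding d_def mat_times_opmat_def by simp
qed

lemma regular_form_dim_row:
  "regular_form q \<chi> W \<Longrightarrow> dim_row W = \<chi>+2"
  unfolding regular_form_def opmat_ok_def by auto

lemma V_block_carrier: "V_block \<chi> W \<in> carrier_mat (\<chi>+1) (\<chi>+1)"
  by (simp add: V_block_def)

lemma pos_rr_block_QR_preserves_cols_lin_indpt:
  assumes QR: "pos_rr_block_QR q W Q R" and W: "dim_row W = \<chi>+2"
    and indpt: "opmat_cols_lin_indpt q (V_block \<chi> W)"
  shows "dim_row (mat_times_opmat q R Q) = \<chi>+2 \<and>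
    opmat_cols_lin_indpt q (V_block \<chi> (mat_times_opmat q R Q))"
proof -
  obtain \<chi>0 \<chi>' V' R' where reg: "regular_form q \<chi>0 W"
    and V': "opmat_ok q (\<chi>0+1) (\<chi>'+1) V'" and orth: "orthonormal_cols q V'"
    and R': "R' \<in> carrier_mat (\<chi>'+1) (\<chi>0+1)"
    and VR: "V_block \<chi>0 W = opmat_times_mat q V' R'"
    and Q: "Q = mat (\<chi>0+2) (\<chi>'+2) (\<lambda>(i,j).
            if j \<le> \<chi>' then (if i \<le> \<chi>0 then V' $$ (i,j) else 0\<^sub>m q q)
            else W $$ (i, \<chi>0+1))"
    and R: "R = mat (\<chi>'+2) (\<chi>0+2) (\<lambda>(i,j).
            if i \<le> \<chi>' \<and> j \<le> \<chi>0 then R' $$ (i,j)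
            else if i = \<chi>'+1 \<and> j = \<chi>0+1 then 1 else 0)"
    and rank: "column_rank (flatten q (V_block \<chi>0 W)) = 1 + \<chi>'"
    using QR unfolding pos_rr_block_QR_def by blast
  have \<chi>0: "\<chi>0 = \<chi>" using regular_form_dim_row[OF reg] W by simp
  have "column_rank (flatten q (V_block \<chi> W)) = \<chi>+1"
    by (rule column_rank_flatten[OF V_block_carrier indpt])
  then have \<chi>': "\<chi>' = \<chi>" using rank \<chi>0 by simp
  have V'_dims: "dim_row V' = \<chi>+1" "dim_col V' = \<chi>+1"
    using V' \<chi>0 \<chi>' unfolding opmat_ok_def by auto
  have block: "V_block \<chi> (mat_times_opmat q R Q) = mat_times_opmat q R' V'"
  proof (rule eq_matI)
    fix a j assume "a < dim_row (mat_times_opmat q R' V')" "j < dim_col (mat_times_opmat q R' V')"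
    then have a: "a < \<chi>+1" and j: "j < \<chi>+1"
      using R' V'_dims \<chi>0 \<chi>' by (simp_all add: mat_times_opmat_def)
    \<comment> \<open>the last column of R vanishes above its corner entry\<close>
    have "(\<Sum>m<Suc (\<chi>+1). R $$ (a,m) * Q $$ (m,j) $$ (k,l)) =
        (\<Sum>m<\<chi>+1. R' $$ (a,m) * V' $$ (m,j) $$ (k,l))" for k l
      using a j \<chi>0 \<chi>' by (simp add: R Q)
    then show "V_block \<chi> (mat_times_opmat q R Q) $$ (a,j) = mat_times_opmat q R' V' $$ (a,j)"
      using a j R' V'_dims \<chi>0 \<chi>' by (simp add: V_block_def mat_times_opmat_def R Q)
  qed (use R' V'_dims \<chi>0 \<chi>' in \<open>simp_all add: V_block_def mat_times_opmat_def\<close>)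
  have "opmat_cols_lin_indpt q (mat_times_opmat q R' V')"
    using opmat_cols_lin_indpt_mat_times_opmat[of q V' R' V'] indpt VR \<chi>0
      opmat_cols_lin_indpt_if_orthonormal_cols[OF orth] R' V'_dims \<chi>' by simp
  then show ?thesis using block \<chi>0 \<chi>' by (simp add: R mat_times_opmat_def)
qed

theorem lemma8:
  fixes q \<chi> :: nat and Ob :: "nat \<Rightarrow> complex mat"
    and W Q :: "nat \<Rightarrow> complex mat mat" and R :: "nat \<Rightarrow> complex mat"
    and X :: "complex mat"
  assumes q_pos: "0 < q"
    and onb: "op_onb q Ob"
    and regular: "regular_form q \<chi> (W 0)"
    and first_deg: "first_degree q Ob \<chi> (W 0)"
    and QR_iter: "\<And>n. n \<ge> 1 \<Longrightarrow>
        pos_rr_block_QR q (W (n-1)) (Q n) (R n) \<and> W n = mat_times_opmat q (R n) (Q n)"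
    and X_dim: "X \<in> carrier_mat (\<chi>+1) (\<chi>+1)"
    and X_eig: "transfer q Ob (V_block \<chi> (W 0)) X = X"
    and X_00: "X $$ (0,0) = 1"
    and X_inv: "invertible_mat X"
  shows "\<forall>n. bond_dim (W n) = \<chi>"
proof -
  have "dim_row (W n) = \<chi>+2 \<and> opmat_cols_lin_indpt q (V_block \<chi> (W n))" for n
  proof (induction n)
    case 0
    show ?case
      using regular_form_dim_row[OF regular] opmat_cols_lin_indpt_if_transfer_fixed_invertible[OF
          V_block_carrier X_dim X_eig X_inv] by simp
  next
    case (Suc n)
    have "pos_rr_block_QR q (W n) (Q (Suc n)) (R (Suc n))"
      and "W (Suc n) = mat_times_opmat q (R (Suc n)) (Q (Suc n))"
      using QR_iter[of "Suc n"] by simp_all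
    then show ?case using pos_rr_block_QR_preserves_cols_lin_indpt Suc.IH by metis
  qed
  then show ?thesis unfolding bond_dim_def by simp
qed

end
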